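(* Let $n,m\ge1$ be fixed and let $\alpha>0$, $\beta\ge0$ be fixed constants. There exists a constant $c$ (depending on $\alpha,\beta$ but independent of $N$) with the following property. Let $N\ge1$ and let $\mathbf A_i,\mathbf Q_i\in\mathbb R^{n\times n}$, $\mathbf B_i,\mathbf S_i\in\mathbb R^{n\times m}$, $\mathbf R_i\in\mathbb R^{m\times m}$ ($1\le i\le N$), $\mathbf T\in\mathbb R^{n\times n}$, with $\mathbf Q_i,\mathbf R_i,\mathbf T$ symmetric, satisfy: the smallest eigenvalues of $\mathbf T$ and of each $\begin{pmatrix}\mathbf Q_i&\mathbf S_i\\ \mathbf S_i^{\mathsf T}&\mathbf R_i\end{pmatrix}$ exceed $\alpha$; $\|\mathbf A_i\|_\infty\le1/4$, $\|\mathbf A_i^{\mathsf T}\|_\infty\le1/4$; and all of these matrices have norm at most $\beta$. Suppose $\mathbf D_{1:N}$ is invertible with $\|\mathbf D_{1:N}^{-1}\|_\infty\le2$. Then for every $\mathbf y=(\mathbf y_{1},\mathbf y_2,\mathbf y_3,\mathbf y_4,\mathbf y_5)$ with $\mathbf y_1=(\mathbf y_{1i})_{i=1}^N$, $\mathbf y_3=(\mathbf y_{3i})_{i=1}^N$ in $(\mathbb R^n)^N$, $\mathbf y_2,\mathbf y_4\in\mathbb R^n$, $\mathbf y_5=(\mathbf y_{5i})_{i=1}^N\in(\mathbb R^m)^N$, the solution $(\mathbf X,\mathbf U)$ of the quadratic program $$\min\ \tfrac12\mathcal Q(\mathbf X,\mathbf U)+\mathcal L(\mathbf X,\mathbf U)\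 \text{ s.t. }\ \sum_{j=1}^ND_{ij}\mathbf X_j=\mathbf A_i\mathbf X_i+\mathbf B_i\mathbf U_i+\mathbf y_{1i}\ (1\le i\le N),\quad \mathbf X_{N+1}=\sum_{j=1}^N\omega_j(\mathbf A_j\mathbf X_j+\mathbf B_j\mathbf U_j)+\mathbf y_2,$$ where $\mathcal Q(\mathbf X,\mathbf U)=\mathbf X_{N+1}^{\mathsf T}\mathbf T\mathbf X_{N+1}+\sum_{i=1}^N\omega_i(\mathbf X_i^{\mathsf T}\mathbf Q_i\mathbf X_i+2\mathbf X_i^{\mathsf T}\mathbf S_i\mathbf U_i+\mathbf U_i^{\mathsf T}\mathbf R_i\mathbf U_i)$ and $\mathcal L(\mathbf X,\mathbf U)=\mathbf y_4^{\mathsf T}\mathbf X_{N+1}-\sum_{i=1}^N\omega_i(\mathbf y_{3i}^{\mathsf T}\mathbf X_i+\mathbf y_{5i}^{\mathsf T}\mathbf U_i)$, satisfies $\|\mathbf X\|_\omega\le c\|\mathbf y\|_\infty$ and $\|\mathbf U\|_\omega\le c\|\mathbf y\|_\infty$.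
   Context: Unknowns: $\mathbf X=(\mathbf X_1,\dots,\mathbf X_{N+1})$, $\mathbf X_i\in\mathbb R^n$, and $\mathbf U=(\mathbf U_1,\dots,\mathbf U_N)$, $\mathbf U_i\in\mathbb R^m$. $-1<\tau_1<\dots<\tau_N<1$ are the $N$ Gauss abscissas (roots of the degree-$N$ Legendre polynomial), $\omega_1,\dots,\omega_N>0$ the Gauss weights, $\tau_0=-1$. $D_{ij}=\dot L_j(\tau_i)$ ($1\le i\le N$, $0\le j\le N$) with $L_j(\tau)=\prod_{k=0,k\ne j}^N\frac{\tau-\tau_k}{\tau_j-\tau_k}$ and $\mathbf D_{1:N}=(D_{ij})_{1\le i,j\le N}$. Matrix $\|\cdot\|_\infty$ is the largest absolute row sum. $\|\mathbf X\|_\omega^2=|\mathbf X_{N+1}|^2+\sum_{i=1}^N\omega_i|\mathbf X_i|^2$, $\|\mathbf U\|_\omega^2=\sum_{i=1}^N\omega_i|\mathbf U_i|^2$, and $\|\mathbf y\|_\infty$ is the maximum Euclidean norm of the $\mathbb R^n$- or $\mathbb R^m$-blocks of $\mathbf y$. (In the paper the matrices come from linearizing the control problem along its optimal solution, so they are bounded independently of $N$, and the eigenvalue and norm conditions are assumptions (A2),(A3),(P1).) *)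

theory Defs
  imports "HOL-Analysis.Analysis" "HOL-Computational_Algebra.Polynomial"
begin

text \<open>Legendre polynomials via Bonnet's recurrence
  (k+1) P_(k+1) = (2k+1) x P_k - k P_(k-1).\<close>
fun legendre :: "nat \<Rightarrow> real poly" where
  "legendre 0 = 1"
| "legendre (Suc 0) = [:0, 1:]"
| "legendre (Suc (Suc k)) =
     smult (1 / (real k + 2))
       (smult (2 * real k + 3) ([:0, 1:] * legendre (Suc k)) - smult (real k + 1) (legendre k))"

definition gauss_nodes :: "nat \<Rightarrow> (nat \<Rightarrow> real) \<Rightarrow> bool" where
  "gauss_nodes N tau \<longleftrightarrow>
     (\<forall>i j. 1 \<le> i \<longrightarrow> i < j \<longrightarrow> j \<le> N \<longrightarrow> tau i < tau j) \<and>
     tau ` {1..N} = {x. poly (legendre N) x = 0}"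

definition gauss_weights :: "nat \<Rightarrow> (nat \<Rightarrow> real) \<Rightarrow> (nat \<Rightarrow> real) \<Rightarrow> bool" where
  "gauss_weights N tau w \<longleftrightarrow>
     (\<forall>i\<in>{1..N}. w i = integral {-1..1}
        (\<lambda>t. \<Prod>k\<in>{1..N} - {i}. (t - tau k) / (tau i - tau k)))"

definition ext_nodes :: "(nat \<Rightarrow> real) \<Rightarrow> nat \<Rightarrow> real" where
  "ext_nodes tau k = (if k = 0 then -1 else tau k)"

definition lagrange_basis :: "nat \<Rightarrow> (nat \<Rightarrow> real) \<Rightarrow> nat \<Rightarrow> real poly" where
  "lagrange_basis N tau j =
     (\<Prod>k\<in>{0..N} - {j}. smult (1 / (ext_nodes tau j - ext_nodes tau k)) [:- ext_nodes tau k, 1:])"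

definition Dmat :: "nat \<Rightarrow> (nat \<Rightarrow> real) \<Rightarrow> nat \<Rightarrow> nat \<Rightarrow> real" where
  "Dmat N tau i j = poly (pderiv (lagrange_basis N tau j)) (tau i)"

definition infnorm_N :: "nat \<Rightarrow> (nat \<Rightarrow> nat \<Rightarrow> real) \<Rightarrow> real" where
  "infnorm_N N M = Max ((\<lambda>i. \<Sum>j\<in>{1..N}. \<bar>M i j\<bar>) ` {1..N})"

definition D_inv_bound :: "nat \<Rightarrow> (nat \<Rightarrow> real) \<Rightarrow> real \<Rightarrow> bool" where
  "D_inv_bound N tau b \<longleftrightarrow>
     (\<exists>E. (\<forall>i\<in>{1..N}. \<forall>j\<in>{1..N}.
            (\<Sum>k\<in>{1..N}. Dmat N tau i k * E k j) = (if i = j then 1 else 0) \<and>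
            (\<Sum>k\<in>{1..N}. E i k * Dmat N tau k j) = (if i = j then 1 else 0)) \<and>
          infnorm_N N E \<le> b)"

definition mat_infnorm :: "real^'c::finite^'r::finite \<Rightarrow> real" where
  "mat_infnorm M = Max (range (\<lambda>i. \<Sum>j\<in>UNIV. \<bar>M $ i $ j\<bar>))"

definition eigenvalues :: "real^'n::finite^'n \<Rightarrow> real set" where
  "eigenvalues M = {l. \<exists>v. v \<noteq> 0 \<and> M *v v = l *\<^sub>R v}"

definition min_eigenvalue :: "real^'n::finite^'n \<Rightarrow> real" where
  "min_eigenvalue M = Min (eigenvalues M)"

definition block_QSR ::
  "real^'n::finite^'n \<Rightarrow> real^'m::finite^'n \<Rightarrow> real^'m^'m \<Rightarrow> real^('n + 'm)^('n + 'm)" where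
  "block_QSR Q S R = (\<chi> i j. case (i, j) of
       (Inl a, Inl b) \<Rightarrow> Q $ a $ b
     | (Inl a, Inr b) \<Rightarrow> S $ a $ b
     | (Inr a, Inl b) \<Rightarrow> S $ b $ a
     | (Inr a, Inr b) \<Rightarrow> R $ a $ b)"

definition qp_feasible ::
  "nat \<Rightarrow> (nat \<Rightarrow> real) \<Rightarrow> (nat \<Rightarrow> real) \<Rightarrow> (nat \<Rightarrow> real^'n::finite^'n) \<Rightarrow> (nat \<Rightarrow> real^'m::finite^'n)
   \<Rightarrow> (nat \<Rightarrow> real^'n) \<Rightarrow> real^'n \<Rightarrow> (nat \<Rightarrow> real^'n) \<Rightarrow> (nat \<Rightarrow> real^'m) \<Rightarrow> bool" where
  "qp_feasible N tau w A B y1 y2 X U \<longleftrightarrow>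
     (\<forall>i\<in>{1..N}. (\<Sum>j\<in>{1..N}. Dmat N tau i j *\<^sub>R X j) = A i *v X i + B i *v U i + y1 i) \<and>
     X (N + 1) = (\<Sum>j\<in>{1..N}. w j *\<^sub>R (A j *v X j + B j *v U j)) + y2"

definition qp_objective ::
  "nat \<Rightarrow> (nat \<Rightarrow> real) \<Rightarrow> real^'n::finite^'n \<Rightarrow> (nat \<Rightarrow> real^'n^'n) \<Rightarrow> (nat \<Rightarrow> real^'m::finite^'n)
   \<Rightarrow> (nat \<Rightarrow> real^'m^'m) \<Rightarrow> (nat \<Rightarrow> real^'n) \<Rightarrow> real^'n \<Rightarrow> (nat \<Rightarrow> real^'m)
   \<Rightarrow> (nat \<Rightarrow> real^'n) \<Rightarrow> (nat \<Rightarrow> real^'m) \<Rightarrow> real" where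
  "qp_objective N w T Q S R y3 y4 y5 X U =
     (1/2) * (X (N + 1) \<bullet> (T *v X (N + 1)) +
        (\<Sum>i\<in>{1..N}. w i * (X i \<bullet> (Q i *v X i) + 2 * (X i \<bullet> (S i *v U i)) + U i \<bullet> (R i *v U i))))
     + (y4 \<bullet> X (N + 1) - (\<Sum>i\<in>{1..N}. w i * (y3 i \<bullet> X i + y5 i \<bullet> U i)))"

definition Xnorm_w :: "nat \<Rightarrow> (nat \<Rightarrow> real) \<Rightarrow> (nat \<Rightarrow> real^'n::finite) \<Rightarrow> real" where
  "Xnorm_w N w X = sqrt ((norm (X (N + 1)))\<^sup>2 + (\<Sum>i\<in>{1..N}. w i * (norm (X i))\<^sup>2))"

definition Unorm_w :: "nat \<Rightarrow> (nat \<Rightarrow> real) \<Rightarrow> (nat \<Rightarrow> real^'m::finite) \<Rightarrow> real" where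
  "Unorm_w N w U = sqrt (\<Sum>i\<in>{1..N}. w i * (norm (U i))\<^sup>2)"

definition ynorm_inf ::
  "nat \<Rightarrow> (nat \<Rightarrow> real^'n::finite) \<Rightarrow> real^'n \<Rightarrow> (nat \<Rightarrow> real^'n) \<Rightarrow> real^'n \<Rightarrow> (nat \<Rightarrow> real^'m::finite) \<Rightarrow> real" where
  "ynorm_inf N y1 y2 y3 y4 y5 =
     Max ((\<lambda>i. norm (y1 i)) ` {1..N} \<union> {norm y2} \<union> (\<lambda>i. norm (y3 i)) ` {1..N}
          \<union> {norm y4} \<union> (\<lambda>i. norm (y5 i)) ` {1..N})"

end

theory Submission
  imports Defs
begin

text \<open>
  Since \<open>\<parallel>D\<^sub>1\<^sub>:\<^sub>N\<^sup>-\<^sup>1\<parallel>\<^sub>\<infinity> \<le> 2\<close> and \<open>\<parallel>A\<^sub>i\<parallel>\<^sub>2 \<le> 1/4\<close> (Schur's test), the map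
  \<open>X \<mapsto> D\<^sub>1\<^sub>:\<^sub>N\<^sup>-\<^sup>1 (A X + y\<^sub>1)\<close> halves sup-distances, so the dynamics with zero control have a solution
  with \<open>|X\<^sub>i| \<le> 4\<parallel>y\<parallel>\<^sub>\<infinity>\<close>; as the Gauss weights are nonnegative with sum 2, also
  \<open>|X\<^sub>N\<^sub>+\<^sub>1| \<le> 3\<parallel>y\<parallel>\<^sub>\<infinity>\<close>. Hence the optimal value is \<open>O(\<parallel>y\<parallel>\<^sub>\<infinity>\<^sup>2)\<close>. Conversely, coercivity of
  \<open>T\<close> and of the blocks \<open>[[Q\<^sub>i, S\<^sub>i], [S\<^sub>i\<^sup>T, R\<^sub>i]]\<close> bounds the objective below by
  \<open>\<alpha>/4 (\<parallel>X\<parallel>\<^sub>\<omega>\<^sup>2 + \<parallel>U\<parallel>\<^sub>\<omega>\<^sup>2) - 5\<parallel>y\<parallel>\<^sub>\<infinity>\<^sup>2/\<alpha>\<close>. Nonnegativity of the weights is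
  \<open>\<integral>\<ell>\<^sub>i = \<integral>\<ell>\<^sub>i\<^sup>2\<close>: \<open>\<ell>\<^sub>i\<^sup>2 - \<ell>\<^sub>i\<close> is the Legendre polynomial \<open>P\<^sub>N\<close> times a polynomial of
  degree \<open>< N\<close>, to which \<open>P\<^sub>N\<close> is orthogonal.
\<close>

section \<open>Legendre polynomials and Gauss weights\<close>

lemma degree_legendre_le: "degree (legendre k) \<le> k"
proof (induction k rule: legendre.induct)
  case (3 k)
  have "degree ([:0, 1:] * legendre (Suc k)) \<le> Suc (Suc k)"
    using degree_mult_le[of "[:0, 1:]" "legendre (Suc k)"] 3 by simp
  then have "degree (smult (2 * real k + 3) ([:0, 1:] * legendre (Suc k))
      - smult (real k + 1) (legendre k)) \<le> Suc (Suc k)"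
    using 3 degree_diff_le by (metis degree_smult_le le_SucI order.trans)
  then show ?case by (simp add: order.trans[OF degree_smult_le])
qed simp_all

lemma legendre_derivative_identities:
  "t * poly (pderiv (legendre (Suc k))) t - poly (pderiv (legendre k)) t
      = (real k + 1) * poly (legendre (Suc k)) t \<and>
   (t * t - 1) * poly (pderiv (legendre (Suc k))) t
      = (real k + 1) * (t * poly (legendre (Suc k)) t - poly (legendre k) t)"
proof (induction k)
  case 0
  then show ?case by (simp add: pderiv_pCons)
next
  case (Suc k)
  define a where "a = poly (legendre (Suc k)) t"
  define b where "b = poly (legendre k) t"
  define a' where "a' = poly (pderiv (legendre (Suc k))) t"
  define b' where "b' = poly (pderiv (legendre k)) t"
  have IH: "t * a' - b' = (real k + 1) * a" "(t * t - 1) * a' = (real k + 1) * (t * a - b)"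
    using Suc by (simp_all add: a_def b_def a'_def b'_def)
  define p where "p = poly (legendre (Suc (Suc k))) t"
  define p' where "p' = poly (pderiv (legendre (Suc (Suc k)))) t"
  have rec: "(real k + 2) * p = (2 * real k + 3) * t * a - (real k + 1) * b"
    by (simp add: p_def a_def b_def field_simps)
  have rec': "(real k + 2) * p' = (2 * real k + 3) * (a + t * a') - (real k + 1) * b'"
    by (simp add: p'_def a_def a'_def b'_def pderiv_smult pderiv_diff pderiv_mult pderiv_pCons field_simps)
  have "(real k + 2) * (t * p' - a') = (real k + 2) * ((real k + 2) * p)"
    using rec rec' IH by algebra
  moreover have "(real k + 2) * ((t * t - 1) * p') = (real k + 2) * ((real k + 2) * (t * p - a))"
    using rec rec' IH by algebra
  ultimately show ?case
    unfolding p_def[symmetric] p'_def[symmetric] a_def[symmetric] a'_def[symmetric]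
    by (simp add: add.commute)
qed

lemma legendre_derivative_identities_poly:
  shows "[:0, 1:] * pderiv (legendre (Suc k)) - pderiv (legendre k)
      = smult (real k + 1) (legendre (Suc k))"
    and "[:-1, 0, 1:] * pderiv (legendre (Suc k))
      = smult (real k + 1) ([:0, 1:] * legendre (Suc k) - legendre k)"
proof -
  show "[:0, 1:] * pderiv (legendre (Suc k)) - pderiv (legendre k)
      = smult (real k + 1) (legendre (Suc k))"
    by (rule poly_eq_poly_eq_iff[THEN iffD1, OF ext])
      (simp add: conjunct1[OF legendre_derivative_identities])
  show "[:-1, 0, 1:] * pderiv (legendre (Suc k))
      = smult (real k + 1) ([:0, 1:] * legendre (Suc k) - legendre k)"
    by (rule poly_eq_poly_eq_iff[THEN iffD1, OF ext])
      (use conjunct2[OF legendre_derivative_identities] in \<open>simp add: algebra_simps\<close>)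
qed

lemma legendre_ode:
  "pderiv ([:-1, 0, 1:] * pderiv (legendre (Suc k)))
     = smult ((real k + 1) * (real k + 2)) (legendre (Suc k))"
proof -
  have "pderiv ([:-1, 0, 1:] * pderiv (legendre (Suc k)))
     = smult (real k + 1) (legendre (Suc k) + ([:0, 1:] * pderiv (legendre (Suc k)) - pderiv (legendre k)))"
    unfolding legendre_derivative_identities_poly(2)
    by (simp add: pderiv_smult pderiv_diff pderiv_mult pderiv_pCons algebra_simps)
  also have "\<dots> = smult ((real k + 1) * (real k + 2)) (legendre (Suc k))"
    unfolding legendre_derivative_identities_poly(1) by (simp add: poly_eq_iff algebra_simps)
  finally show ?thesis .
qed

definition poly_integral :: "real poly \<Rightarrow> real" where
  "poly_integral p = integral {-1..1} (poly p)"

lemma poly_integrable_on: "poly (p :: real poly) integrable_on {a..b}"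
  by (intro integrable_continuous_interval continuous_intros)

lemma poly_integral_add: "poly_integral (p + q) = poly_integral p + poly_integral q"
  unfolding poly_integral_def poly_add
  by (rule integral_add[OF poly_integrable_on poly_integrable_on])

lemma poly_integral_diff: "poly_integral (p - q) = poly_integral p - poly_integral q"
  unfolding poly_integral_def poly_diff
  by (rule integral_diff[OF poly_integrable_on poly_integrable_on])

lemma poly_integral_smult: "poly_integral (smult c p) = c * poly_integral p"
  unfolding poly_integral_def poly_smult by simp

lemma poly_integral_sum:
  "finite I \<Longrightarrow> poly_integral (\<Sum>i\<in>I. f i) = (\<Sum>i\<in>I. poly_integral (f i))"
  by (induction I rule: finite_induct)
    (auto simp: poly_integral_add poly_integral_smult[of 0 0, simplified])

lemma poly_integral_pderiv: "poly_integral (pderiv p) = poly p 1 - poly p (-1)"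
proof -
  have "(poly (pderiv p) has_integral poly p 1 - poly p (-1)) {-1..1}"
    by (intro fundamental_theorem_of_calculus has_real_derivative_iff_has_vector_derivative[THEN iffD1]
        DERIV_subset[OF poly_DERIV]) auto
  then show ?thesis
    unfolding poly_integral_def by (rule integral_unique)
qed

lemma poly_integral_one: "poly_integral 1 = 2"
  using poly_integral_pderiv[of "[:0, 1:]"] by (simp add: pderiv_pCons one_pCons)

lemma poly_integral_square_nonneg: "0 \<le> poly_integral (p * p)"
  unfolding poly_integral_def by (rule integral_nonneg[OF poly_integrable_on]) simp

lemma poly_integral_by_parts:
  "poly_integral (pderiv g * q) = poly (g * q) 1 - poly (g * q) (-1) - poly_integral (g * pderiv q)"
  using poly_integral_pderiv[of "g * q"] by (simp add: pderiv_mult poly_integral_add mult.commute)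

text \<open>The Legendre operator \<open>q \<mapsto> ((x\<^sup>2 - 1) q')'\<close> is symmetric for the integral over
  \<open>[-1, 1]\<close>: the boundary terms vanish at the roots \<open>\<pm>1\<close> of \<open>x\<^sup>2 - 1\<close>.\<close>
lemma legendre_operator_symmetric:
  "(real k + 1) * (real k + 2) * poly_integral (legendre (Suc k) * q)
     = poly_integral (legendre (Suc k) * pderiv ([:-1, 0, 1:] * pderiv q))"
proof -
  define P where "P = legendre (Suc k)"
  define G where "G = [:-1, 0, 1:] * pderiv P"
  define H where "H = [:-1, 0, 1:] * pderiv q"
  have "(real k + 1) * (real k + 2) * poly_integral (P * q) = poly_integral (pderiv G * q)"
    unfolding G_def P_def legendre_ode by (simp add: poly_integral_smult)
  also have "\<dots> = - poly_integral (G * pderiv q)"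
    unfolding poly_integral_by_parts by (simp add: G_def)
  also have "G * pderiv q = pderiv P * H"
    by (simp add: G_def H_def algebra_simps)
  also have "poly_integral (pderiv P * H) = - poly_integral (P * pderiv H)"
    unfolding poly_integral_by_parts by (simp add: H_def)
  finally show ?thesis
    by (simp add: P_def H_def)
qed

lemma legendre_operator_monom:
  "pderiv ([:-1, 0, 1:] * pderiv ([:0, 1:] ^ j))
     = smult (real j * (real j + 1)) ([:0, 1:] ^ j) - smult (real j * (real j - 1)) ([:0, 1:] ^ (j - 2))"
proof (cases "j \<ge> 2")
  case True
  then obtain l where j: "j = Suc (Suc l)"
    by (metis add_2_eq_Suc le_Suc_ex)
  have d: "pderiv ([:0, 1 :: real:] ^ Suc n) = smult (real (Suc n)) ([:0, 1:] ^ n)" for n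
    by (simp only: pderiv_power_Suc) (simp add: pderiv_pCons)
  have "pderiv ([:-1, 0, 1:] * pderiv ([:0, 1:] ^ j))
      = smult (real j) (pderiv [:-1, 0, 1:] * [:0, 1:] ^ Suc l + [:-1, 0, 1:] * smult (real (Suc l)) ([:0, 1:] ^ l))"
    unfolding j d pderiv_smult mult_smult_right pderiv_mult by (simp add: algebra_simps)
  then show ?thesis
    by (intro poly_eq_poly_eq_iff[THEN iffD1] ext)
      (simp add: j pderiv_pCons power2_eq_square algebra_simps)
next
  case False
  then have "j = 0 \<or> j = 1" by auto
  then show ?thesis by (auto simp: pderiv_pCons)
qed

text \<open>Moving the Legendre operator onto \<open>x\<^sup>j\<close> shows that \<open>(k + 1)(k + 2) - j (j + 1)\<close> times the
  integral is a multiple of the integral against \<open>x\<^sup>j\<^sup>-\<^sup>2\<close>, which vanishes by induction.\<close>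
lemma legendre_orthogonal_monom:
  "j \<le> k \<Longrightarrow> poly_integral (legendre (Suc k) * [:0, 1:] ^ j) = 0"
proof (induction j rule: less_induct)
  case (less j)
  define P where "P = legendre (Suc k)"
  define a where "a = real j * (real j + 1)"
  define b where "b = real j * (real j - 1)"
  have "(real k + 1) * (real k + 2) * poly_integral (P * [:0, 1:] ^ j)
      = poly_integral (P * (smult a ([:0, 1:] ^ j) - smult b ([:0, 1:] ^ (j - 2))))"
    unfolding P_def a_def b_def legendre_operator_symmetric legendre_operator_monom ..
  also have "\<dots> = a * poly_integral (P * [:0, 1:] ^ j) - b * poly_integral (P * [:0, 1:] ^ (j - 2))"
    by (simp add: right_diff_distrib poly_integral_diff poly_integral_smult)
  also have "b * poly_integral (P * [:0, 1:] ^ (j - 2)) = 0"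
  proof (cases "j \<ge> 2")
    case True
    then show ?thesis using less.IH[of "j - 2"] less.prems by (simp add: P_def)
  next
    case False
    then have "j = 0 \<or> j = 1" by auto
    then show ?thesis by (auto simp: b_def)
  qed
  finally have "((real k + 1) * (real k + 2) - a) * poly_integral (P * [:0, 1:] ^ j) = 0"
    by (simp add: algebra_simps)
  moreover have "a < (real k + 1) * (real k + 2)"
  proof -
    have "a \<le> real k * (real k + 1)"
      unfolding a_def using less.prems by (intro mult_mono) auto
    then show ?thesis by (simp add: algebra_simps)
  qed
  ultimately show ?case by (simp add: P_def)
qed

lemma legendre_orthogonal:
  assumes "degree q < k"
  shows "poly_integral (legendre k * q) = 0"
proof -
  obtain k' where k: "k = Suc k'"
    using assms by (cases k) auto
  have "legendre k * q = (\<Sum>i\<le>degree q. smult (coeff q i) (legendre k * [:0, 1:] ^ i))"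
    by (subst poly_as_sum_of_monoms[of q, symmetric])
      (simp add: monom_altdef sum_distrib_left)
  then show ?thesis
    using assms by (simp add: k poly_integral_sum poly_integral_smult legendre_orthogonal_monom)
qed

definition gauss_lagrange :: "nat \<Rightarrow> (nat \<Rightarrow> real) \<Rightarrow> nat \<Rightarrow> real poly" where
  "gauss_lagrange N tau i = (\<Prod>k\<in>{1..N} - {i}. smult (1 / (tau i - tau k)) [:- tau k, 1:])"

lemma poly_gauss_lagrange:
  "poly (gauss_lagrange N tau i) t = (\<Prod>k\<in>{1..N} - {i}. (t - tau k) / (tau i - tau k))"
  unfolding gauss_lagrange_def poly_prod by (simp add: diff_divide_distrib)

lemma degree_gauss_lagrange_le: "i \<in> {1..N} \<Longrightarrow> degree (gauss_lagrange N tau i) \<le> N - 1"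
proof -
  assume i: "i \<in> {1..N}"
  have "degree (gauss_lagrange N tau i)
      \<le> sum (degree \<circ> (\<lambda>k. smult (1 / (tau i - tau k)) [:- tau k, 1:])) ({1..N} - {i})"
    unfolding gauss_lagrange_def by (rule degree_prod_sum_le) simp
  also have "\<dots> \<le> (\<Sum>k\<in>{1..N} - {i}. 1)"
    by (rule sum_mono) (simp add: order.trans[OF degree_smult_le])
  finally show ?thesis using i by simp
qed

locale gauss_rule =
  fixes N :: nat and tau :: "nat \<Rightarrow> real"
  assumes N_pos: "N \<ge> 1" and nodes: "gauss_nodes N tau"
begin

lemma inj_on_nodes: "inj_on tau {1..N}"
proof (rule inj_onI, rule ccontr)
  fix i j assume "i \<in> {1..N}" "j \<in> {1..N}" "tau i = tau j" "i \<noteq> j"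
  then have "i < j \<or> j < i" by auto
  then show False
    using nodes \<open>i \<in> {1..N}\<close> \<open>j \<in> {1..N}\<close> \<open>tau i = tau j\<close>
    unfolding gauss_nodes_def by fastforce
qed

lemma card_nodes: "card (tau ` {1..N}) = N"
  using card_image[OF inj_on_nodes] by simp

lemma legendre_roots: "{x. poly (legendre N) x = 0} = tau ` {1..N}"
  using nodes unfolding gauss_nodes_def by simp

lemma legendre_nonzero: "legendre N \<noteq> 0"
proof
  assume "legendre N = 0"
  then have "(UNIV :: real set) = tau ` {1..N}"
    using legendre_roots by simp
  then have "finite (UNIV :: real set)"
    by (metis finite_atLeastAtMost finite_imageI)
  then show False by (simp add: infinite_UNIV_char_0)
qed

lemma degree_legendre: "degree (legendre N) = N"
  using card_poly_roots_bound[OF legendre_nonzero] degree_legendre_le[of N] legendre_roots card_nodes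
  by simp

lemma poly_eq_0_if_vanishes_at_nodes:
  assumes "degree p < N" and "\<forall>i\<in>{1..N}. poly p (tau i) = 0"
  shows "p = 0"
proof (rule ccontr)
  assume p: "p \<noteq> 0"
  have "card (tau ` {1..N}) \<le> card {x. poly p x = 0}"
    using assms(2) by (intro card_mono[OF poly_roots_finite[OF p]]) auto
  then show False
    using card_poly_roots_bound[OF p] assms(1) card_nodes by simp
qed

lemma poly_gauss_lagrange_node:
  assumes "i \<in> {1..N}" "j \<in> {1..N}"
  shows "poly (gauss_lagrange N tau i) (tau j) = (if i = j then 1 else 0)"
proof (cases "i = j")
  case True
  have "tau i \<noteq> tau k" if "k \<in> {1..N} - {i}" for k
    using inj_on_nodes assms that by (metis DiffD1 DiffD2 insertCI inj_onD)
  then show ?thesis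
    unfolding poly_gauss_lagrange using True by (auto intro!: prod.neutral)
next
  case False
  then show ?thesis
    using assms unfolding poly_gauss_lagrange by (auto intro!: prod_zero)
qed

lemma sum_gauss_lagrange: "(\<Sum>i\<in>{1..N}. gauss_lagrange N tau i) = 1"
proof -
  have "(\<Sum>i\<in>{1..N}. gauss_lagrange N tau i) - 1 = 0"
  proof (rule poly_eq_0_if_vanishes_at_nodes)
    have "degree (\<Sum>i\<in>{1..N}. gauss_lagrange N tau i) \<le> N - 1"
      by (rule degree_sum_le) (use degree_gauss_lagrange_le in auto)
    then show "degree ((\<Sum>i\<in>{1..N}. gauss_lagrange N tau i) - 1) < N"
      using N_pos degree_diff_le[of _ "N - 1" 1] by fastforce
    have "(\<Sum>i\<in>{1..N}. poly (gauss_lagrange N tau i) (tau j)) = 1" if "j \<in> {1..N}" for j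
      using that by (simp add: poly_gauss_lagrange_node)
    then show "\<forall>j\<in>{1..N}. poly ((\<Sum>i\<in>{1..N}. gauss_lagrange N tau i) - 1) (tau j) = 0"
      by (simp add: poly_sum)
  qed
  then show ?thesis by simp
qed

text \<open>\<open>\<ell>\<^sub>i\<^sup>2 - \<ell>\<^sub>i\<close> vanishes at the nodes, so it is \<open>P\<^sub>N\<close> times a polynomial of degree \<open>< N\<close>,
  which is orthogonal to \<open>P\<^sub>N\<close>.\<close>
lemma integral_gauss_lagrange_square:
  assumes i: "i \<in> {1..N}"
  shows "poly_integral (gauss_lagrange N tau i) = poly_integral (gauss_lagrange N tau i ^ 2)"
proof -
  define L where "L = gauss_lagrange N tau i"
  define P where "P = legendre N"
  have "P dvd L ^ 2 - L"
  proof -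
    have "(L ^ 2 - L) mod P = 0"
    proof (rule poly_eq_0_if_vanishes_at_nodes)
      show "degree ((L ^ 2 - L) mod P) < N"
        using degree_mod_less[of P "L ^ 2 - L"] legendre_nonzero degree_legendre N_pos
        by (cases "(L ^ 2 - L) mod P = 0") (auto simp: P_def)
      have "poly P (tau j) = 0" if "j \<in> {1..N}" for j
        using legendre_roots that by (auto simp: P_def)
      moreover have "poly (L ^ 2 - L) (tau j) = 0" if "j \<in> {1..N}" for j
        using poly_gauss_lagrange_node[OF i that] by (simp add: L_def)
      ultimately show "\<forall>j\<in>{1..N}. poly ((L ^ 2 - L) mod P) (tau j) = 0"
        using div_mult_mod_eq[of "L ^ 2 - L" P] by (metis add_0 mult_zero_right poly_add poly_mult)
    qed
    then show ?thesis by (simp add: mod_eq_0_iff_dvd)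
  qed
  then obtain s where s: "L ^ 2 - L = P * s" by (elim dvdE)
  have "degree s < N"
  proof (cases "s = 0")
    case False
    have "degree (L ^ 2 - L) \<le> 2 * (N - 1)"
      using degree_gauss_lagrange_le[OF i, of tau] degree_power_le[of L 2]
      by (intro degree_diff_le) (auto simp: L_def)
    then show ?thesis
      using N_pos degree_mult_eq[OF legendre_nonzero False] degree_legendre by (simp add: s P_def)
  qed (use N_pos in simp)
  then have "poly_integral (L ^ 2 - L) = 0"
    unfolding s P_def by (rule legendre_orthogonal)
  then show ?thesis by (simp add: L_def poly_integral_diff)
qed

lemma gauss_weights_nonneg_sum:
  assumes "gauss_weights N tau w"
  shows "\<forall>i\<in>{1..N}. 0 \<le> w i" and "(\<Sum>i\<in>{1..N}. w i) = 2"
proof -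
  have w: "w i = poly_integral (gauss_lagrange N tau i)" if "i \<in> {1..N}" for i
    using assms that unfolding gauss_weights_def poly_integral_def poly_gauss_lagrange[abs_def] by simp
  show "\<forall>i\<in>{1..N}. 0 \<le> w i"
    using poly_integral_square_nonneg by (simp add: w integral_gauss_lagrange_square power2_eq_square)
  have "(\<Sum>i\<in>{1..N}. w i) = (\<Sum>i\<in>{1..N}. poly_integral (gauss_lagrange N tau i))"
    by (rule sum.cong) (simp_all add: w)
  then show "(\<Sum>i\<in>{1..N}. w i) = 2"
    using sum_gauss_lagrange poly_integral_one by (simp add: poly_integral_sum[symmetric])
qed

end

section \<open>Quadratic forms and matrix norms\<close>

lemma inner_mult_vec_symmetric:
  "transpose M = (M :: real^'a::finite^'a) \<Longrightarrow> x \<bullet> (M *v y) = y \<bullet> (M *v x)"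
  by (metis dot_lmul_matrix inner_commute vector_transpose_matrix)

text \<open>Eigenvectors of distinct eigenvalues of a symmetric matrix are orthogonal, hence independent.\<close>
lemma finite_eigenvalues:
  fixes M :: "real^'a::finite^'a"
  assumes M: "transpose M = M"
  shows "finite (eigenvalues M)"
proof -
  define E where "E = eigenvalues M"
  define e where "e l = (SOME v. v \<noteq> 0 \<and> M *v v = l *\<^sub>R v)" for l
  have e: "e l \<noteq> 0 \<and> M *v e l = l *\<^sub>R e l" if "l \<in> E" for l
    using that unfolding E_def eigenvalues_def e_def by (metis (mono_tags, lifting) mem_Collect_eq someI_ex)
  have orth: "e l \<bullet> e m = 0" if "l \<in> E" "m \<in> E" "l \<noteq> m" for l m
  proof -
    have "l * (e m \<bullet> e l) = e m \<bullet> (M *v e l)" using e[OF that(1)] by simp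
    also have "\<dots> = e l \<bullet> (M *v e m)" by (rule inner_mult_vec_symmetric[OF M])
    also have "\<dots> = m * (e l \<bullet> e m)" using e[OF that(2)] by simp
    finally have "(l - m) * (e l \<bullet> e m) = 0" by (simp add: inner_commute algebra_simps)
    then show ?thesis using that(3) by simp
  qed
  have "inj_on e E"
  proof (rule inj_onI, rule ccontr)
    fix l m assume "l \<in> E" "m \<in> E" "e l = e m" "l \<noteq> m"
    then have "e l \<bullet> e l = 0" using orth by metis
    then show False using e[OF \<open>l \<in> E\<close>] by simp
  qed
  moreover have "pairwise orthogonal (e ` E)"
    unfolding pairwise_def orthogonal_def using orth by auto
  then have "independent (e ` E)"
    by (rule pairwise_orthogonal_independent) (use e in auto)
  then have "finite (e ` E)" using independent_bound by blast
  ultimately show ?thesis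
    unfolding E_def by (rule finite_imageD[rotated])
qed

lemma linear_coeff_zero_if_quadratic_nonneg:
  fixes b c :: real
  assumes "\<And>t. 0 \<le> 2 * t * b + t * t * c"
  shows "b = 0"
proof (rule ccontr)
  assume "b \<noteq> 0"
  define s where "s = \<bar>c\<bar> + 1"
  define t where "t = - b / s"
  have s: "s > 0" "c \<le> s" unfolding s_def by auto
  have "t * t * c \<le> t * t * s"
    using s by (intro mult_left_mono) auto
  also have "t * t * s = b * b / s"
    using s by (simp add: t_def field_simps)
  finally have "2 * t * b + t * t * c \<le> - (b * b / s)"
    by (simp add: t_def)
  moreover have "0 < b * b / s"
    using \<open>b \<noteq> 0\<close> s by (metis divide_pos_pos not_real_square_gt_zero)
  ultimately show False
    using assms[of t] by linarith
qed

text \<open>A minimiser \<open>v\<close> of the quadratic form on the unit sphere is an eigenvector: the first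
  variation in a direction \<open>w\<close> gives \<open>(M v - \<lambda> v) \<bullet> w = 0\<close>.\<close>
lemma quadratic_form_ge_min_eigenvalue:
  fixes M :: "real^'a::finite^'a"
  assumes M: "transpose M = M" and a: "min_eigenvalue M > a"
  shows "a * (norm x)\<^sup>2 \<le> x \<bullet> (M *v x)"
proof -
  define f where "f y = y \<bullet> (M *v y)" for y
  have f_scale: "f (c *\<^sub>R y) = c * c * f y" for c y
    unfolding f_def by (simp add: matrix_vector_mult_scaleR)
  have "axis undefined 1 \<in> sphere (0 :: real^'a) 1"
    by simp
  moreover have "continuous_on (sphere 0 1) f"
    unfolding f_def by (intro continuous_intros)
  ultimately obtain v where "v \<in> sphere 0 1" and v_min: "\<forall>y\<in>sphere 0 1. f v \<le> f y"
    using continuous_attains_inf[OF compact_sphere] by blast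
  then have v: "norm v = 1" by simp
  define l where "l = f v"
  have f_ge: "l * (norm z)\<^sup>2 \<le> f z" for z
  proof (cases "z = 0")
    case False
    have "l \<le> f ((1 / norm z) *\<^sub>R z)"
      unfolding l_def using v_min False by simp
    also have "\<dots> = f z / (norm z)\<^sup>2"
      unfolding f_scale by (simp add: power2_eq_square)
    finally show ?thesis
      using False by (simp add: field_simps)
  qed (simp add: f_def)
  define w where "w = M *v v - l *\<^sub>R v"
  have "0 \<le> 2 * t * (w \<bullet> w) + t * t * (f w - l * (norm w)\<^sup>2)" for t
  proof -
    have "(norm (v + t *\<^sub>R w))\<^sup>2 = 1 + 2 * t * (v \<bullet> w) + t * t * (norm w)\<^sup>2"
      using v norm_eq_1[of v] by (simp add: power2_norm_eq_inner inner_add_left inner_add_right algebra_simps inner_commute)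
    moreover have "f (v + t *\<^sub>R w) = l + 2 * t * (w \<bullet> (M *v v)) + t * t * f w"
      unfolding f_def l_def using inner_mult_vec_symmetric[OF M, of v w]
      by (simp add: matrix_vector_right_distrib matrix_vector_mult_scaleR inner_add_left
          inner_add_right algebra_simps)
    moreover have "w \<bullet> (M *v v) = w \<bullet> w + l * (v \<bullet> w)"
      unfolding w_def by (simp add: inner_diff_right inner_commute right_diff_distrib)
    ultimately show ?thesis
      using f_ge[of "v + t *\<^sub>R w"] by (simp add: algebra_simps)
  qed
  then have "w \<bullet> w = 0"
    by (rule linear_coeff_zero_if_quadratic_nonneg)
  then have "M *v v = l *\<^sub>R v"
    by (simp add: w_def)
  moreover have "v \<noteq> 0"
    using v by auto
  ultimately have "l \<in> eigenvalues M"
    unfolding eigenvalues_def by blast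
  then have "min_eigenvalue M \<le> l"
    unfolding min_eigenvalue_def using finite_eigenvalues[OF M] by (rule Min_le[rotated])
  then have "a \<le> l"
    using a by linarith
  then show ?thesis
    using f_ge[of x] mult_right_mono[of a l "(norm x)\<^sup>2"] by (simp add: f_def)
qed

lemma sum_UNIV_sum:
  "(\<Sum>k\<in>(UNIV :: ('a::finite + 'b::finite) set). f k) = (\<Sum>a\<in>UNIV. f (Inl a)) + (\<Sum>b\<in>UNIV. f (Inr b))"
proof -
  have "(\<Sum>k\<in>(UNIV :: ('a + 'b) set). f k) = (\<Sum>k\<in>Inl ` UNIV \<union> Inr ` UNIV. f k)"
    by (simp only: UNIV_sum[symmetric])
  also have "\<dots> = (\<Sum>a\<in>UNIV. f (Inl a)) + (\<Sum>b\<in>UNIV. f (Inr b))"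
    by (subst sum.union_disjoint) (auto simp: sum.reindex)
  finally show ?thesis .
qed

definition block_vec :: "real^'n::finite \<Rightarrow> real^'m::finite \<Rightarrow> real^('n + 'm)" where
  "block_vec x u = (\<chi> k. case k of Inl a \<Rightarrow> x $ a | Inr b \<Rightarrow> u $ b)"

lemma norm_block_vec: "(norm (block_vec x u))\<^sup>2 = (norm x)\<^sup>2 + (norm u)\<^sup>2"
  unfolding power2_norm_eq_inner inner_vec_def
  by (subst sum_UNIV_sum) (simp add: block_vec_def)

lemma transpose_block_QSR:
  assumes "transpose Q = Q" "transpose R = R"
  shows "transpose (block_QSR Q S R) = block_QSR Q S R"
proof -
  have "Q $ a $ b = Q $ b $ a" "R $ c $ d = R $ d $ c" for a b c d
    using arg_cong[OF assms(1), of "\<lambda>M. M $ b $ a"] arg_cong[OF assms(2), of "\<lambda>M. M $ d $ c"]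
    by (simp_all add: transpose_def)
  then show ?thesis
    unfolding vec_eq_iff transpose_def block_QSR_def by (auto split: sum.split)
qed

lemma quadratic_form_block_QSR:
  "block_vec x u \<bullet> (block_QSR Q S R *v block_vec x u) = x \<bullet> (Q *v x) + 2 * (x \<bullet> (S *v u)) + u \<bullet> (R *v u)"
proof -
  have "(\<Sum>a\<in>UNIV. u $ a * (\<Sum>b\<in>UNIV. S $ b $ a * x $ b)) = (\<Sum>a\<in>UNIV. x $ a * (\<Sum>b\<in>UNIV. S $ a $ b * u $ b))"
    by (simp add: sum_distrib_left algebra_simps) (rule sum.swap)
  then show ?thesis
    unfolding inner_vec_def matrix_vector_mult_def
    by (simp add: sum_UNIV_sum block_vec_def block_QSR_def distrib_left sum.distrib)
qed

lemma row_sum_le_mat_infnorm: "(\<Sum>j\<in>UNIV. \<bar>M $ i $ j\<bar>) \<le> mat_infnorm (M :: real^'c::finite^'r::finite)"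
  unfolding mat_infnorm_def by (rule Max_ge) auto

lemma mat_infnorm_nonneg: "0 \<le> mat_infnorm (M :: real^'c::finite^'r::finite)"
  by (rule order.trans[OF sum_nonneg row_sum_le_mat_infnorm]) simp

lemma norm_mult_vec_le_mat_infnorm:
  "norm (M *v x) \<le> real CARD('r) * mat_infnorm (M :: real^'c::finite^'r::finite) * norm x"
proof -
  have "\<bar>(M *v x) $ i\<bar> \<le> mat_infnorm M * norm x" for i
  proof -
    have "\<bar>(M *v x) $ i\<bar> = \<bar>\<Sum>j\<in>UNIV. M $ i $ j * x $ j\<bar>"
      by (simp add: matrix_vector_mult_def)
    also have "\<dots> \<le> (\<Sum>j\<in>UNIV. \<bar>M $ i $ j\<bar> * norm x)"
      by (rule order.trans[OF sum_abs sum_mono]) (simp add: abs_mult mult_left_mono component_le_norm_cart)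
    also have "\<dots> \<le> mat_infnorm M * norm x"
      by (simp add: sum_distrib_right[symmetric] mult_right_mono row_sum_le_mat_infnorm)
    finally show ?thesis .
  qed
  then have "(\<Sum>i\<in>UNIV. \<bar>(M *v x) $ i\<bar>) \<le> real CARD('r) * (mat_infnorm M * norm x)"
    using sum_mono[of UNIV "\<lambda>i. \<bar>(M *v x) $ i\<bar>" "\<lambda>_. mat_infnorm M * norm x"] by simp
  then show ?thesis
    using norm_le_l1_cart[of "M *v x"] by (simp add: mult.assoc)
qed

lemma quadratic_form_le_mat_infnorm:
  "x \<bullet> (M *v x) \<le> real CARD('r) * mat_infnorm (M :: real^'r::finite^'r) * (norm x)\<^sup>2"
proof -
  have "x \<bullet> (M *v x) \<le> norm x * norm (M *v x)"
    by (rule norm_cauchy_schwarz)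
  also have "\<dots> \<le> norm x * (real CARD('r) * mat_infnorm M * norm x)"
    by (rule mult_left_mono[OF norm_mult_vec_le_mat_infnorm]) simp
  finally show ?thesis
    by (simp add: power2_eq_square algebra_simps)
qed

text \<open>Schur's test: by Cauchy-Schwarz on each row,
  \<open>(A x)\<^sub>i\<^sup>2 \<le> (\<Sum>\<^sub>j |A\<^sub>i\<^sub>j|) (\<Sum>\<^sub>j |A\<^sub>i\<^sub>j| x\<^sub>j\<^sup>2)\<close>, and summing over \<open>i\<close> brings in the column sums.\<close>
lemma norm_mult_vec_le_schur:
  fixes A :: "real^'c::finite^'r::finite"
  assumes rows: "mat_infnorm A \<le> a" and cols: "mat_infnorm (transpose A) \<le> a"
  shows "norm (A *v x) \<le> a * norm x"
proof -
  have a: "0 \<le> a" using rows mat_infnorm_nonneg order.trans by blast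
  have row: "((A *v x) $ i)\<^sup>2 \<le> a * (\<Sum>j\<in>UNIV. \<bar>A $ i $ j\<bar> * (x $ j)\<^sup>2)" for i
  proof -
    have "\<bar>(A *v x) $ i\<bar> \<le> (\<Sum>j\<in>UNIV. \<bar>A $ i $ j\<bar> * \<bar>x $ j\<bar>)"
      by (simp add: matrix_vector_mult_def abs_mult[symmetric] sum_abs)
    then have "((A *v x) $ i)\<^sup>2 \<le> (\<Sum>j\<in>UNIV. \<bar>A $ i $ j\<bar> * \<bar>x $ j\<bar>)\<^sup>2"
      by (metis abs_ge_zero power2_abs power_mono)
    also have "(\<Sum>j\<in>UNIV. \<bar>A $ i $ j\<bar> * \<bar>x $ j\<bar>)
        = (\<Sum>j\<in>UNIV. sqrt \<bar>A $ i $ j\<bar> * (sqrt \<bar>A $ i $ j\<bar> * \<bar>x $ j\<bar>))"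
      by (simp flip: mult.assoc)
    also have "(\<Sum>j\<in>UNIV. sqrt \<bar>A $ i $ j\<bar> * (sqrt \<bar>A $ i $ j\<bar> * \<bar>x $ j\<bar>))\<^sup>2
        \<le> (\<Sum>j\<in>UNIV. \<bar>A $ i $ j\<bar>) * (\<Sum>j\<in>UNIV. \<bar>A $ i $ j\<bar> * (x $ j)\<^sup>2)"
      using Cauchy_Schwarz_ineq_sum[of "\<lambda>j. sqrt \<bar>A $ i $ j\<bar>" "\<lambda>j. sqrt \<bar>A $ i $ j\<bar> * \<bar>x $ j\<bar>" UNIV]
      by (simp add: power_mult_distrib)
    also have "\<dots> \<le> a * (\<Sum>j\<in>UNIV. \<bar>A $ i $ j\<bar> * (x $ j)\<^sup>2)"
      using row_sum_le_mat_infnorm[of A i] rows by (intro mult_right_mono sum_nonneg) auto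
    finally show ?thesis .
  qed
  have norm_sq: "(norm y)\<^sup>2 = (\<Sum>i\<in>UNIV. (y $ i)\<^sup>2)" for y :: "real^'d::finite"
    unfolding power2_norm_eq_inner inner_vec_def by (simp add: power2_eq_square)
  have "(norm (A *v x))\<^sup>2 = (\<Sum>i\<in>UNIV. ((A *v x) $ i)\<^sup>2)"
    by (rule norm_sq)
  also have "\<dots> \<le> (\<Sum>i\<in>UNIV. a * (\<Sum>j\<in>UNIV. \<bar>A $ i $ j\<bar> * (x $ j)\<^sup>2))"
    by (rule sum_mono[OF row])
  also have "\<dots> = a * (\<Sum>j\<in>UNIV. (x $ j)\<^sup>2 * (\<Sum>i\<in>UNIV. \<bar>transpose A $ j $ i\<bar>))"
    by (simp add: sum_distrib_left transpose_def algebra_simps) (rule sum.swap)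
  also have "\<dots> \<le> a * (\<Sum>j\<in>UNIV. (x $ j)\<^sup>2 * a)"
    using row_sum_le_mat_infnorm[of "transpose A"] cols a
    by (intro mult_left_mono sum_mono) (auto intro: mult_left_mono order.trans)
  also have "\<dots> = (a * norm x)\<^sup>2"
    unfolding power_mult_distrib norm_sq
    by (simp add: sum_distrib_left sum_distrib_right power2_eq_square algebra_simps)
  finally show ?thesis
    by (rule power2_le_imp_le) (use a in simp)
qed

section \<open>Solving the collocation equations\<close>

lemma norm_sum_scaleR_le:
  assumes "\<forall>j\<in>I. norm (v j) \<le> b" and "0 \<le> b"
  shows "norm (\<Sum>j\<in>I. e j *\<^sub>R v j) \<le> (\<Sum>j\<in>I. \<bar>e j\<bar>) * b"
proof -
  have "norm (\<Sum>j\<in>I. e j *\<^sub>R v j) \<le> (\<Sum>j\<in>I. \<bar>e j\<bar> * norm (v j))"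
    using norm_sum[of "\<lambda>j. e j *\<^sub>R v j" I] by simp
  also have "\<dots> \<le> (\<Sum>j\<in>I. \<bar>e j\<bar> * b)"
    using assms(1) by (intro sum_mono mult_left_mono) auto
  finally show ?thesis
    by (simp add: sum_distrib_right)
qed

text \<open>The iterates from \<open>0\<close> stay in the ball and consecutive ones are at most \<open>2 r / 2\<^sup>k\<close>
  apart, so they converge; halving makes \<open>\<Phi>\<close> continuous at the limit.\<close>
lemma halving_map_has_fixpoint:
  fixes \<Phi> :: "(nat \<Rightarrow> 'a::banach) \<Rightarrow> nat \<Rightarrow> 'a"
  assumes I: "finite I" and r: "0 \<le> r"
    and maps_ball: "\<And>X. \<forall>j\<in>I. norm (X j) \<le> r \<Longrightarrow> \<forall>i\<in>I. norm (\<Phi> X i) \<le> r"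
    and halves: "\<And>X Z d. \<forall>j\<in>I. norm (X j - Z j) \<le> d \<Longrightarrow> \<forall>i\<in>I. norm (\<Phi> X i - \<Phi> Z i) \<le> d / 2"
  shows "\<exists>X. (\<forall>i\<in>I. \<Phi> X i = X i) \<and> (\<forall>i\<in>I. norm (X i) \<le> r)"
proof -
  define x where "x k = (\<Phi> ^^ k) (\<lambda>_. 0)" for k
  have x_Suc: "x (Suc k) = \<Phi> (x k)" for k
    by (simp add: x_def)
  have bounded: "\<forall>i\<in>I. norm (x k i) \<le> r" for k
    by (induction k) (simp_all add: x_def r maps_ball)
  have step: "\<forall>i\<in>I. norm (x (Suc k) i - x k i) \<le> 2 * r * (1/2) ^ k" for k
  proof (induction k)
    case 0
    have "norm (x 1 i) \<le> r" if "i \<in> I" for i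
      using bounded that by blast
    then show ?case
      using r by (force simp: x_def)
  next
    case (Suc k)
    have "\<forall>i\<in>I. norm (x (Suc (Suc k)) i - x (Suc k) i) \<le> 2 * r * (1/2) ^ k / 2"
      using halves[OF Suc.IH] by (simp only: x_Suc)
    then show ?case by simp
  qed
  have "convergent (\<lambda>k. x k i)" if "i \<in> I" for i
  proof -
    have "summable (\<lambda>k. x (Suc k) i - x k i)"
      by (rule summable_comparison_test[of _ "\<lambda>k. 2 * r * (1/2) ^ k"])
        (use step that in \<open>auto intro: summable_mult summable_geometric\<close>)
    then have "convergent (\<lambda>k. \<Sum>l<k. x (Suc l) i - x l i)"
      by (rule summable_LIMSEQ[THEN convergentI])
    moreover have "(\<Sum>l<k. x (Suc l) i - x l i) = x k i" for k
      using sum_lessThan_telescope[of "\<lambda>l. x l i" k] by (simp add: x_def)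
    ultimately show ?thesis by simp
  qed
  then obtain X where lim: "\<And>i. i \<in> I \<Longrightarrow> (\<lambda>k. x k i) \<longlonglongrightarrow> X i"
    unfolding convergent_def by metis
  have "(\<lambda>k. \<Phi> (x k) i) \<longlonglongrightarrow> \<Phi> X i" if "i \<in> I" for i
  proof (rule tendstoI)
    fix e :: real assume "e > 0"
    have "\<forall>\<^sub>F k in sequentially. \<forall>j\<in>I. dist (x k j) (X j) < e"
      by (rule eventually_ball_finite[OF I]) (use lim \<open>e > 0\<close> tendstoD in blast)
    then show "\<forall>\<^sub>F k in sequentially. dist (\<Phi> (x k) i) (\<Phi> X i) < e"
    proof (rule eventually_mono)
      fix k assume "\<forall>j\<in>I. dist (x k j) (X j) < e"
      then have "norm (\<Phi> (x k) i - \<Phi> X i) \<le> e / 2"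
        using halves[of "x k" X e] that by (simp add: dist_norm less_imp_le)
      then show "dist (\<Phi> (x k) i) (\<Phi> X i) < e"
        using \<open>e > 0\<close> by (simp add: dist_norm)
    qed
  qed
  moreover have "(\<lambda>k. \<Phi> (x k) i) \<longlonglongrightarrow> X i" if "i \<in> I" for i
    using LIMSEQ_Suc[OF lim[OF that]] by (simp add: x_Suc)
  ultimately have "\<forall>i\<in>I. \<Phi> X i = X i"
    using LIMSEQ_unique by blast
  moreover have "\<forall>i\<in>I. norm (X i) \<le> r"
    using bounded by (blast intro: LIMSEQ_le_const2[OF tendsto_norm[OF lim]])
  ultimately show ?thesis by blast
qed

text \<open>The collocation equations \<open>D X = A X + y\<close> are solved by the fixed point of
  \<open>X \<mapsto> E (A X + y)\<close> with \<open>E\<close> a right inverse of \<open>D\<close>; it halves distances because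
  \<open>\<parallel>E\<parallel>\<^sub>\<infinity> \<le> 2\<close> and \<open>\<parallel>A\<^sub>j\<parallel> \<le> 1/4\<close>.\<close>
lemma collocation_equations_solvable:
  fixes A :: "nat \<Rightarrow> real^'n::finite^'n" and y :: "nat \<Rightarrow> real^'n" and D E :: "nat \<Rightarrow> nat \<Rightarrow> real"
  assumes I: "finite I"
    and E_rows: "\<forall>i\<in>I. (\<Sum>j\<in>I. \<bar>E i j\<bar>) \<le> 2"
    and DE: "\<forall>i\<in>I. \<forall>j\<in>I. (\<Sum>k\<in>I. D i k * E k j) = (if i = j then 1 else 0)"
    and A: "\<forall>j\<in>I. \<forall>v. norm (A j *v v) \<le> 1/4 * norm v"
    and y: "\<forall>j\<in>I. norm (y j) \<le> Y" and Y: "0 \<le> Y"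
  shows "\<exists>X. (\<forall>i\<in>I. (\<Sum>j\<in>I. D i j *\<^sub>R X j) = A i *v X i + y i) \<and> (\<forall>i\<in>I. norm (X i) \<le> 4 * Y)"
proof -
  define \<Phi> where "\<Phi> X i = (\<Sum>j\<in>I. E i j *\<^sub>R (A j *v X j + y j))" for X :: "nat \<Rightarrow> real^'n" and i
  have "\<exists>X. (\<forall>i\<in>I. \<Phi> X i = X i) \<and> (\<forall>i\<in>I. norm (X i) \<le> 4 * Y)"
  proof (rule halving_map_has_fixpoint[OF I])
    fix X :: "nat \<Rightarrow> real^'n" assume X: "\<forall>j\<in>I. norm (X j) \<le> 4 * Y"
    have "norm (A j *v X j + y j) \<le> 2 * Y" if "j \<in> I" for j
    proof -
      have "norm (A j *v X j) \<le> 1/4 * norm (X j)" "norm (X j) \<le> 4 * Y" "norm (y j) \<le> Y"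
        using A X y that by auto
      then show ?thesis
        using norm_triangle_ineq[of "A j *v X j" "y j"] by linarith
    qed
    then have "norm (\<Phi> X i) \<le> (\<Sum>j\<in>I. \<bar>E i j\<bar>) * (2 * Y)" for i
      unfolding \<Phi>_def using Y by (intro norm_sum_scaleR_le) auto
    moreover have "(\<Sum>j\<in>I. \<bar>E i j\<bar>) * (2 * Y) \<le> 2 * (2 * Y)" if "i \<in> I" for i
      using E_rows Y that by (intro mult_right_mono) auto
    ultimately show "\<forall>i\<in>I. norm (\<Phi> X i) \<le> 4 * Y"
      by (smt (verit))
  next
    fix X Z :: "nat \<Rightarrow> real^'n" and d assume XZ: "\<forall>j\<in>I. norm (X j - Z j) \<le> d"
    show "\<forall>i\<in>I. norm (\<Phi> X i - \<Phi> Z i) \<le> d / 2"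
    proof
      fix i assume "i \<in> I"
      then have d: "0 \<le> d" using XZ norm_ge_zero order.trans by blast
      have diff: "\<Phi> X i - \<Phi> Z i = (\<Sum>j\<in>I. E i j *\<^sub>R (A j *v (X j - Z j)))"
        by (simp add: \<Phi>_def sum_subtractf[symmetric] scaleR_diff_right[symmetric]
            matrix_vector_mult_diff_distrib)
      have "norm (A j *v (X j - Z j)) \<le> d / 4" if "j \<in> I" for j
      proof -
        have "norm (A j *v (X j - Z j)) \<le> 1/4 * norm (X j - Z j)" "norm (X j - Z j) \<le> d"
          using A XZ that by auto
        then show ?thesis by linarith
      qed
      then have "norm (\<Phi> X i - \<Phi> Z i) \<le> (\<Sum>j\<in>I. \<bar>E i j\<bar>) * (d / 4)"
        unfolding diff using d by (intro norm_sum_scaleR_le) auto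
      also have "\<dots> \<le> 2 * (d / 4)"
        using E_rows \<open>i \<in> I\<close> d by (intro mult_right_mono) auto
      finally show "norm (\<Phi> X i - \<Phi> Z i) \<le> d / 2" by simp
    qed
  qed (use Y in simp)
  then obtain X where fix_X: "\<forall>i\<in>I. \<Phi> X i = X i" and X: "\<forall>i\<in>I. norm (X i) \<le> 4 * Y"
    by blast
  have "(\<Sum>j\<in>I. D i j *\<^sub>R X j) = A i *v X i + y i" if i: "i \<in> I" for i
  proof -
    define v where "v j = A j *v X j + y j" for j
    have "(\<Sum>j\<in>I. D i j *\<^sub>R X j) = (\<Sum>j\<in>I. D i j *\<^sub>R (\<Sum>k\<in>I. E j k *\<^sub>R v k))"
      using fix_X by (intro sum.cong) (auto simp: \<Phi>_def v_def)
    also have "\<dots> = (\<Sum>k\<in>I. (\<Sum>j\<in>I. D i j * E j k) *\<^sub>R v k)"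
      by (simp add: scaleR_sum_right scaleR_sum_left) (rule sum.swap)
    also have "\<dots> = (\<Sum>k\<in>I. (if i = k then v k else 0))"
      using DE i by (intro sum.cong) auto
    also have "\<dots> = v i"
      using i I by simp
    finally show ?thesis by (simp add: v_def)
  qed
  then show ?thesis using X by blast
qed

section \<open>Bounds for the quadratic program\<close>

lemma ynorm_inf_ge:
  shows "i \<in> {1..N} \<Longrightarrow> norm (y1 i) \<le> ynorm_inf N y1 y2 y3 y4 y5"
    and "norm y2 \<le> ynorm_inf N y1 y2 y3 y4 y5"
    and "i \<in> {1..N} \<Longrightarrow> norm (y3 i) \<le> ynorm_inf N y1 y2 y3 y4 y5"
    and "norm y4 \<le> ynorm_inf N y1 y2 y3 y4 y5"
    and "i \<in> {1..N} \<Longrightarrow> norm (y5 i) \<le> ynorm_inf N y1 y2 y3 y4 y5"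
  unfolding ynorm_inf_def by (intro Max_ge; simp)+

lemma qp_feasible_zero_control:
  fixes A :: "nat \<Rightarrow> real^'n::finite^'n" and B :: "nat \<Rightarrow> real^'m::finite^'n"
  assumes w: "\<forall>i\<in>{1..N}. 0 \<le> w i" "(\<Sum>i\<in>{1..N}. w i) = 2"
    and D: "D_inv_bound N tau 2"
    and A: "\<forall>j\<in>{1..N}. \<forall>v. norm (A j *v v) \<le> 1/4 * norm v"
    and y: "\<forall>i\<in>{1..N}. norm (y1 i) \<le> Y" "norm y2 \<le> Y"
  shows "\<exists>X. qp_feasible N tau w A B y1 y2 X (\<lambda>_. 0) \<and>
             (\<forall>i\<in>{1..N}. norm (X i) \<le> 4 * Y) \<and> norm (X (N + 1)) \<le> 3 * Y"
proof -
  obtain E where DE: "\<forall>i\<in>{1..N}. \<forall>j\<in>{1..N}. (\<Sum>k\<in>{1..N}. Dmat N tau i k * E k j) = (if i = j then 1 else 0)"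
    and E: "infnorm_N N E \<le> 2"
    using D unfolding D_inv_bound_def by blast
  have "(\<Sum>j\<in>{1..N}. \<bar>E i j\<bar>) \<le> infnorm_N N E" if "i \<in> {1..N}" for i
    unfolding infnorm_N_def using that by (intro Max_ge) auto
  then have E_rows: "\<forall>i\<in>{1..N}. (\<Sum>j\<in>{1..N}. \<bar>E i j\<bar>) \<le> 2"
    using E by fastforce
  have "0 \<le> Y"
    using y(2) norm_ge_zero order.trans by blast
  then obtain X where X: "\<forall>i\<in>{1..N}. (\<Sum>j\<in>{1..N}. Dmat N tau i j *\<^sub>R X j) = A i *v X i + y1 i"
    and X_bound: "\<forall>i\<in>{1..N}. norm (X i) \<le> 4 * Y"
    using collocation_equations_solvable[OF _ E_rows DE A y(1)] by blast
  define X\<^sub>N where "X\<^sub>N = (\<Sum>j\<in>{1..N}. w j *\<^sub>R (A j *v X j + B j *v 0)) + y2"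
  have "norm (\<Sum>j\<in>{1..N}. w j *\<^sub>R (A j *v X j + B j *v 0)) \<le> (\<Sum>j\<in>{1..N}. w j * Y)"
  proof (rule order.trans[OF norm_sum sum_mono])
    fix j assume j: "j \<in> {1..N}"
    have "norm (A j *v X j) \<le> 1/4 * norm (X j)" "norm (X j) \<le> 4 * Y"
      using A X_bound j by auto
    then have "norm (A j *v X j) \<le> Y" by linarith
    then show "norm (w j *\<^sub>R (A j *v X j + B j *v 0)) \<le> w j * Y"
      using w j by (simp add: mult_left_mono)
  qed
  also have "\<dots> = 2 * Y"
    using w(2) by (simp add: sum_distrib_right[symmetric])
  finally have "norm X\<^sub>N \<le> 3 * Y"
    unfolding X\<^sub>N_def using y(2) by (intro norm_triangle_le) linarith
  moreover have "qp_feasible N tau w A B y1 y2 (X(N + 1 := X\<^sub>N)) (\<lambda>_. 0)"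
  proof -
    have "(\<Sum>j\<in>{1..N}. Dmat N tau i j *\<^sub>R (X(N + 1 := X\<^sub>N)) j) = (\<Sum>j\<in>{1..N}. Dmat N tau i j *\<^sub>R X j)"
      for i by (rule sum.cong) auto
    moreover have "(\<Sum>j\<in>{1..N}. w j *\<^sub>R (A j *v (X(N + 1 := X\<^sub>N)) j + B j *v 0))
        = (\<Sum>j\<in>{1..N}. w j *\<^sub>R (A j *v X j + B j *v 0))"
      by (rule sum.cong) auto
    ultimately show ?thesis
      using X unfolding qp_feasible_def X\<^sub>N_def by simp
  qed
  ultimately show ?thesis
    using X_bound by (intro exI[of _ "X(N + 1 := X\<^sub>N)"]) auto
qed

lemma qp_objective_zero_control_le:
  fixes T :: "real^'n::finite^'n" and Q :: "nat \<Rightarrow> real^'n^'n" and X :: "nat \<Rightarrow> real^'n"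
    and U :: "nat \<Rightarrow> real^'m::finite"
  assumes w: "\<forall>i\<in>{1..N}. 0 \<le> w i" "(\<Sum>i\<in>{1..N}. w i) = 2"
    and T: "mat_infnorm T \<le> \<beta>" and Q: "\<forall>i\<in>{1..N}. mat_infnorm (Q i) \<le> \<beta>"
    and X: "\<forall>i\<in>{1..N}. norm (X i) \<le> r" "norm (X (N + 1)) \<le> s"
    and y: "\<forall>i\<in>{1..N}. norm (y3 i) \<le> Y" "norm y4 \<le> Y"
  shows "qp_objective N w T Q S R y3 y4 y5 X (\<lambda>_. 0 :: real^'m)
      \<le> real CARD('n) * \<beta> * (s\<^sup>2 / 2 + r\<^sup>2) + Y * s + 2 * Y * r"
proof -
  define c where "c = real CARD('n) * \<beta>"
  have c: "0 \<le> c"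
    unfolding c_def using T mat_infnorm_nonneg order.trans by (metis of_nat_0_le_iff zero_le_mult_iff)
  have quad: "x \<bullet> (M *v x) \<le> c * t\<^sup>2" if "mat_infnorm M \<le> \<beta>" "norm x \<le> t" for x t and M :: "real^'n^'n"
  proof -
    have "x \<bullet> (M *v x) \<le> real CARD('n) * mat_infnorm M * (norm x)\<^sup>2"
      by (rule quadratic_form_le_mat_infnorm)
    also have "\<dots> \<le> c * t\<^sup>2"
      unfolding c_def using that c mat_infnorm_nonneg[of M]
      by (intro mult_mono power_mono) (auto simp: c_def)
    finally show ?thesis .
  qed
  have dot_le: "v \<bullet> z \<le> Y * t" if "norm v \<le> Y" "norm z \<le> t" for v z :: "real^'n" and t
  proof -
    have "v \<bullet> z \<le> norm v * norm z"
      by (rule norm_cauchy_schwarz)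
    also have "\<dots> \<le> Y * t"
      using that by (intro mult_mono) (auto intro: order.trans[OF norm_ge_zero])
    finally show ?thesis .
  qed
  have lin: "- (y3 i \<bullet> X i) \<le> Y * r" if "i \<in> {1..N}" for i
    using dot_le[of "- y3 i" "X i" r] y(1) X(1) that by simp
  have "(\<Sum>i\<in>{1..N}. w i * (X i \<bullet> (Q i *v X i) + 2 * (X i \<bullet> (S i *v 0)) + 0 \<bullet> (R i *v 0)))
      \<le> (\<Sum>i\<in>{1..N}. w i * (c * r\<^sup>2))"
    using w(1) Q X(1) by (intro sum_mono) (simp add: mult_left_mono quad)
  moreover have "- (\<Sum>i\<in>{1..N}. w i * (y3 i \<bullet> X i + y5 i \<bullet> 0)) \<le> (\<Sum>i\<in>{1..N}. w i * (Y * r))"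
    unfolding sum_negf[symmetric]
  proof (rule sum_mono)
    fix i assume i: "i \<in> {1..N}"
    show "- (w i * (y3 i \<bullet> X i + y5 i \<bullet> 0)) \<le> w i * (Y * r)"
      using mult_left_mono[OF lin[OF i], of "w i"] w(1) i by simp
  qed
  moreover have "y4 \<bullet> X (N + 1) \<le> Y * s"
    using y(2) X(2) by (rule dot_le)
  moreover have "X (N + 1) \<bullet> (T *v X (N + 1)) \<le> c * s\<^sup>2"
    using T X(2) by (rule quad)
  ultimately show ?thesis
    unfolding qp_objective_def c_def[symmetric] sum_distrib_right[symmetric] w(2)
    by (simp add: algebra_simps)
qed

text \<open>Coercivity of \<open>T\<close> and of the blocks \<open>[[Q\<^sub>i, S\<^sub>i], [S\<^sub>i\<^sup>T, R\<^sub>i]]\<close>, with Young's inequality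
  \<open>Y t \<le> \<alpha> t\<^sup>2 / 4 + Y\<^sup>2 / \<alpha>\<close> absorbing the linear terms.\<close>
lemma qp_objective_ge:
  fixes T :: "real^'n::finite^'n" and X :: "nat \<Rightarrow> real^'n" and U :: "nat \<Rightarrow> real^'m::finite"
  assumes \<alpha>: "\<alpha> > 0"
    and w: "\<forall>i\<in>{1..N}. 0 \<le> w i" "(\<Sum>i\<in>{1..N}. w i) = 2"
    and T: "transpose T = T" "min_eigenvalue T > \<alpha>"
    and QSR: "\<forall>i\<in>{1..N}. transpose (Q i) = Q i \<and> transpose (R i) = R i \<and>
                min_eigenvalue (block_QSR (Q i) (S i) (R i)) > \<alpha>"
    and y: "\<forall>i\<in>{1..N}. norm (y3 i) \<le> Y \<and> norm (y5 i) \<le> Y" "norm y4 \<le> Y"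
  shows "\<alpha> / 4 * ((Xnorm_w N w X)\<^sup>2 + (Unorm_w N w U)\<^sup>2) - 5 * Y\<^sup>2 / \<alpha>
      \<le> qp_objective N w T Q S R y3 y4 y5 X U"
proof -
  have young: "Y * t \<le> \<alpha> / 4 * t\<^sup>2 + Y\<^sup>2 / \<alpha>" for t
  proof -
    have "0 \<le> (\<alpha> * t - 2 * Y)\<^sup>2 / (4 * \<alpha>)"
      using \<alpha> by simp
    then show ?thesis
      using \<alpha> by (simp add: power2_eq_square field_simps)
  qed
  have dot_le: "v \<bullet> z \<le> \<alpha> / 4 * (norm z)\<^sup>2 + Y\<^sup>2 / \<alpha>" if "norm v \<le> Y" for v z :: "real^'d::finite"
    using norm_cauchy_schwarz[of v z] mult_right_mono[OF that norm_ge_zero[of z]] young[of "norm z"]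
    by linarith
  define cost where "cost i = X i \<bullet> (Q i *v X i) + 2 * (X i \<bullet> (S i *v U i)) + U i \<bullet> (R i *v U i)" for i
  define xN where "xN = (norm (X (N + 1)))\<^sup>2"
  define sX where "sX = (\<Sum>i\<in>{1..N}. w i * (norm (X i))\<^sup>2)"
  define sU where "sU = (\<Sum>i\<in>{1..N}. w i * (norm (U i))\<^sup>2)"
  define Z where "Z = Y\<^sup>2 / \<alpha>"
  have cost: "\<alpha> * ((norm (X i))\<^sup>2 + (norm (U i))\<^sup>2) \<le> cost i" if "i \<in> {1..N}" for i
  proof -
    have "transpose (block_QSR (Q i) (S i) (R i)) = block_QSR (Q i) (S i) (R i)"
      using QSR that by (intro transpose_block_QSR) auto
    then have "\<alpha> * (norm (block_vec (X i) (U i)))\<^sup>2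
        \<le> block_vec (X i) (U i) \<bullet> (block_QSR (Q i) (S i) (R i) *v block_vec (X i) (U i))"
      using QSR that by (intro quadratic_form_ge_min_eigenvalue) auto
    then show ?thesis
      unfolding norm_block_vec quadratic_form_block_QSR cost_def .
  qed
  have "(\<Sum>i\<in>{1..N}. \<alpha> * (w i * (norm (X i))\<^sup>2) + \<alpha> * (w i * (norm (U i))\<^sup>2)) \<le> (\<Sum>i\<in>{1..N}. w i * cost i)"
  proof (rule sum_mono)
    fix i assume i: "i \<in> {1..N}"
    show "\<alpha> * (w i * (norm (X i))\<^sup>2) + \<alpha> * (w i * (norm (U i))\<^sup>2) \<le> w i * cost i"
      using mult_left_mono[OF cost[OF i], of "w i"] w(1) i by (simp add: algebra_simps)
  qed
  then have quad_part: "\<alpha> * sX + \<alpha> * sU \<le> (\<Sum>i\<in>{1..N}. w i * cost i)"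
    by (simp add: sX_def sU_def sum.distrib sum_distrib_left)
  have "(\<Sum>i\<in>{1..N}. w i * (y3 i \<bullet> X i + y5 i \<bullet> U i))
      \<le> (\<Sum>i\<in>{1..N}. \<alpha> / 4 * (w i * (norm (X i))\<^sup>2) + \<alpha> / 4 * (w i * (norm (U i))\<^sup>2) + 2 * Z * w i)"
  proof (rule sum_mono)
    fix i assume i: "i \<in> {1..N}"
    have "y3 i \<bullet> X i \<le> \<alpha> / 4 * (norm (X i))\<^sup>2 + Z"
      and "y5 i \<bullet> U i \<le> \<alpha> / 4 * (norm (U i))\<^sup>2 + Z"
      using dot_le[of "y3 i" "X i"] dot_le[of "y5 i" "U i"] y(1) i by (auto simp: Z_def)
    then have "w i * (y3 i \<bullet> X i + y5 i \<bullet> U i)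
        \<le> w i * (\<alpha> / 4 * (norm (X i))\<^sup>2 + \<alpha> / 4 * (norm (U i))\<^sup>2 + 2 * Z)"
      using w(1) i by (intro mult_left_mono) auto
    then show "w i * (y3 i \<bullet> X i + y5 i \<bullet> U i)
        \<le> \<alpha> / 4 * (w i * (norm (X i))\<^sup>2) + \<alpha> / 4 * (w i * (norm (U i))\<^sup>2) + 2 * Z * w i"
      by (simp add: algebra_simps)
  qed
  then have linear_part: "(\<Sum>i\<in>{1..N}. w i * (y3 i \<bullet> X i + y5 i \<bullet> U i)) \<le> \<alpha> * sX / 4 + \<alpha> * sU / 4 + 4 * Z"
    using w(2) by (simp add: sX_def sU_def sum.distrib flip: sum_distrib_left sum_divide_distrib)
  have "\<alpha> * xN \<le> X (N + 1) \<bullet> (T *v X (N + 1))"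
    unfolding xN_def by (rule quadratic_form_ge_min_eigenvalue[OF T])
  moreover have "- (y4 \<bullet> X (N + 1)) \<le> \<alpha> * xN / 4 + Z"
    using dot_le[of "- y4" "X (N + 1)"] y(2) by (simp add: xN_def Z_def)
  moreover have norms: "\<alpha> / 4 * ((Xnorm_w N w X)\<^sup>2 + (Unorm_w N w U)\<^sup>2) - 5 * Y\<^sup>2 / \<alpha>
      = \<alpha> * xN / 4 + \<alpha> * sX / 4 + \<alpha> * sU / 4 - 5 * Z"
  proof -
    have "0 \<le> sX" "0 \<le> sU"
      using w(1) by (auto simp: sX_def sU_def intro!: sum_nonneg)
    then show ?thesis
      unfolding Xnorm_w_def Unorm_w_def xN_def sX_def sU_def Z_def by (simp add: algebra_simps)
  qed
  ultimately show ?thesis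
    using quad_part linear_part unfolding qp_objective_def cost_def[symmetric] norms
    by (simp add: field_simps)
qed

text \<open>\<open>(41/2 n \<beta> + 11) Y\<^sup>2\<close> bounds the objective at the feasible point with zero control
  (\<open>r = 4 Y\<close>, \<open>s = 3 Y\<close>); comparing with the coercive lower bound gives the square of the constant.\<close>
definition qp_bound_const :: "real \<Rightarrow> real \<Rightarrow> real \<Rightarrow> real" where
  "qp_bound_const \<alpha> \<beta> n = sqrt (4 / \<alpha> * (41/2 * n * \<beta> + 11 + 5 / \<alpha>))"

lemma qp_solution_bound:
  fixes A :: "nat \<Rightarrow> real^'n::finite^'n" and B :: "nat \<Rightarrow> real^'m::finite^'n"
    and X :: "nat \<Rightarrow> real^'n" and U :: "nat \<Rightarrow> real^'m"
  assumes \<alpha>: "\<alpha> > 0"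
    and N: "N \<ge> 1" and nodes: "gauss_nodes N tau" and weights: "gauss_weights N tau w"
    and T: "transpose T = T" "min_eigenvalue T > \<alpha>" "mat_infnorm T \<le> \<beta>"
    and H: "\<forall>i\<in>{1..N}. transpose (Q i) = Q i \<and> transpose (R i) = R i \<and>
        min_eigenvalue (block_QSR (Q i) (S i) (R i)) > \<alpha> \<and>
        mat_infnorm (A i) \<le> 1/4 \<and> mat_infnorm (transpose (A i)) \<le> 1/4 \<and>
        mat_infnorm (A i) \<le> \<beta> \<and> mat_infnorm (B i) \<le> \<beta> \<and> mat_infnorm (Q i) \<le> \<beta> \<and>
        mat_infnorm (S i) \<le> \<beta> \<and> mat_infnorm (R i) \<le> \<beta>"
    and D: "D_inv_bound N tau 2"
    and feasible: "qp_feasible N tau w A B y1 y2 X U"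
    and optimal: "\<forall>X' U'. qp_feasible N tau w A B y1 y2 X' U' \<longrightarrow>
        qp_objective N w T Q S R y3 y4 y5 X U \<le> qp_objective N w T Q S R y3 y4 y5 X' U'"
  shows "Xnorm_w N w X \<le> qp_bound_const \<alpha> \<beta> CARD('n) * ynorm_inf N y1 y2 y3 y4 y5 \<and>
         Unorm_w N w U \<le> qp_bound_const \<alpha> \<beta> CARD('n) * ynorm_inf N y1 y2 y3 y4 y5"
proof -
  define Y where "Y = ynorm_inf N y1 y2 y3 y4 y5"
  define K where "K = 4 / \<alpha> * (41/2 * real CARD('n) * \<beta> + 11 + 5 / \<alpha>)"
  have y: "\<forall>i\<in>{1..N}. norm (y1 i) \<le> Y" "norm y2 \<le> Y"
    "\<forall>i\<in>{1..N}. norm (y3 i) \<le> Y \<and> norm (y5 i) \<le> Y" "norm y4 \<le> Y"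
    unfolding Y_def by (simp_all add: ynorm_inf_ge)
  have Y: "0 \<le> Y"
    using y(2) norm_ge_zero order.trans by blast
  interpret gauss_rule N tau
    using N nodes by unfold_locales
  note w = gauss_weights_nonneg_sum[OF weights]
  have A: "\<forall>j\<in>{1..N}. \<forall>v. norm (A j *v v) \<le> 1/4 * norm v"
    using H norm_mult_vec_le_schur by blast
  obtain X\<^sub>0 where feasible\<^sub>0: "qp_feasible N tau w A B y1 y2 X\<^sub>0 (\<lambda>_. 0)"
    and X\<^sub>0: "\<forall>i\<in>{1..N}. norm (X\<^sub>0 i) \<le> 4 * Y" "norm (X\<^sub>0 (N + 1)) \<le> 3 * Y"
    using qp_feasible_zero_control[OF w D A] y by blast
  have "qp_objective N w T Q S R y3 y4 y5 X U \<le> qp_objective N w T Q S R y3 y4 y5 X\<^sub>0 (\<lambda>_. 0)"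
    using optimal feasible\<^sub>0 by blast
  also have "\<dots> \<le> real CARD('n) * \<beta> * ((3 * Y)\<^sup>2 / 2 + (4 * Y)\<^sup>2) + Y * (3 * Y) + 2 * Y * (4 * Y)"
    using qp_objective_zero_control_le[OF w T(3) _ X\<^sub>0] H y by blast
  also have "\<dots> = (41/2 * real CARD('n) * \<beta> + 11) * Y\<^sup>2"
    by (simp add: power2_eq_square algebra_simps)
  finally have "qp_objective N w T Q S R y3 y4 y5 X U \<le> (41/2 * real CARD('n) * \<beta> + 11) * Y\<^sup>2" .
  moreover have "\<alpha> / 4 * ((Xnorm_w N w X)\<^sup>2 + (Unorm_w N w U)\<^sup>2) - 5 * Y\<^sup>2 / \<alpha>
      \<le> qp_objective N w T Q S R y3 y4 y5 X U"
    using H y by (intro qp_objective_ge[OF \<alpha> w T(1,2)]) auto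
  ultimately have "\<alpha> / 4 * ((Xnorm_w N w X)\<^sup>2 + (Unorm_w N w U)\<^sup>2)
      \<le> (41/2 * real CARD('n) * \<beta> + 11) * Y\<^sup>2 + 5 * Y\<^sup>2 / \<alpha>"
    by linarith
  also have "\<dots> = \<alpha> / 4 * (K * Y\<^sup>2)"
    using \<alpha> by (simp add: K_def field_simps)
  finally have "(Xnorm_w N w X)\<^sup>2 + (Unorm_w N w U)\<^sup>2 \<le> K * Y\<^sup>2"
    using \<alpha> by simp
  then have "Xnorm_w N w X \<le> sqrt (K * Y\<^sup>2) \<and> Unorm_w N w U \<le> sqrt (K * Y\<^sup>2)"
    using zero_le_power2[of "Xnorm_w N w X"] zero_le_power2[of "Unorm_w N w U"]
    by (intro conjI real_le_rsqrt) linarith+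
  moreover have "sqrt (K * Y\<^sup>2) = qp_bound_const \<alpha> \<beta> CARD('n) * Y"
    unfolding qp_bound_const_def K_def real_sqrt_mult real_sqrt_abs using Y by simp
  ultimately show ?thesis
    unfolding Y_def[symmetric] by simp
qed

theorem lemma5p1:
  fixes \<alpha> \<beta> :: real
  assumes "\<alpha> > 0" and "\<beta> \<ge> 0"
  shows "\<exists>c::real. \<forall>(N::nat) tau w
      (A :: nat \<Rightarrow> real^'n::finite^'n) (B :: nat \<Rightarrow> real^'m::finite^'n)
      (Q :: nat \<Rightarrow> real^'n^'n) (S :: nat \<Rightarrow> real^'m^'n) (R :: nat \<Rightarrow> real^'m^'m)
      (T :: real^'n^'n)
      (y1 :: nat \<Rightarrow> real^'n) (y2 :: real^'n) (y3 :: nat \<Rightarrow> real^'n) (y4 :: real^'n)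
      (y5 :: nat \<Rightarrow> real^'m) (X :: nat \<Rightarrow> real^'n) (U :: nat \<Rightarrow> real^'m).
     N \<ge> 1 \<longrightarrow> gauss_nodes N tau \<longrightarrow> gauss_weights N tau w \<longrightarrow>
     transpose T = T \<longrightarrow> min_eigenvalue T > \<alpha> \<longrightarrow> mat_infnorm T \<le> \<beta> \<longrightarrow>
     (\<forall>i\<in>{1..N}. transpose (Q i) = Q i \<and> transpose (R i) = R i \<and>
        min_eigenvalue (block_QSR (Q i) (S i) (R i)) > \<alpha> \<and>
        mat_infnorm (A i) \<le> 1/4 \<and> mat_infnorm (transpose (A i)) \<le> 1/4 \<and>
        mat_infnorm (A i) \<le> \<beta> \<and> mat_infnorm (B i) \<le> \<beta> \<and> mat_infnorm (Q i) \<le> \<beta> \<and>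
        mat_infnorm (S i) \<le> \<beta> \<and> mat_infnorm (R i) \<le> \<beta>) \<longrightarrow>
     D_inv_bound N tau 2 \<longrightarrow>
     qp_feasible N tau w A B y1 y2 X U \<longrightarrow>
     (\<forall>X' U'. qp_feasible N tau w A B y1 y2 X' U' \<longrightarrow>
        qp_objective N w T Q S R y3 y4 y5 X U \<le> qp_objective N w T Q S R y3 y4 y5 X' U') \<longrightarrow>
     Xnorm_w N w X \<le> c * ynorm_inf N y1 y2 y3 y4 y5 \<and>
     Unorm_w N w U \<le> c * ynorm_inf N y1 y2 y3 y4 y5"
  by (intro exI[of _ "qp_bound_const \<alpha> \<beta> CARD('n)"] allI impI)
    (rule qp_solution_bound[OF assms(1)]; assumption)

end
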